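(* Let $n\geq 2$. Every countable dense $n$-dimensional partial order with realizers is isomorphic to $\mathbf{D}_{n,<_1,\ldots,<_n}=(D_n,<,<_1,\ldots,<_n)$, and $\mathbf{D}_{n,<_1,\ldots,<_n}$ is itself a countable dense $n$-dimensional partial order with realizers; i.e. it is the unique such structure up to isomorphism.
   Context: Fix $n\geq 2$ and a set $D_n\subseteq\mathbb{Q}^n$ which is dense in $\mathbb{Q}^n$ (product topology) and such that no two distinct points of $D_n$ share a common coordinate. On $D_n$, $<$ is the product order ($\mathbf{a}<\mathbf{b}$ iff $a_i\leq b_i$ for all $i$ and $\mathbf{a}\neq\mathbf{b}$) and $<_i$ is the $i$th coordinate order ($\mathbf{a}<_i\mathbf{b}$ iff $a_i<b_i$). An $n$-dimensional partial order with realizers is a structure $(P,<,<_1,\ldots,<_n)$ ($P$ nonempty) where $<_1,\ldots,<_n$ are strict linear orders on $P$ and $a<b$ iff $a<_ib$ for all $i\leq n$. It is dense (i.e. a model of the theory $\mathsf{DPO}_{n,<_1,\ldots,<_n}$) if every region determined by finitely many points is nonempty, precisely: for every nonempty finite $F\subseteq P$ and every choice, for each $i\leq n$, of a "gap" of $F$ in $<_i$ — namely a pair $(l_i,r_i)$ with $l_i\in F\cup\{-\infty\}$, $r_i\in F\cup\{+\infty\}$, $l_i<_i r_i$ and no element of $F$ strictly $<_i$-between $l_i$ and $r_i$ — there is $u\in P$ with $l_i<_iu<_ir_i$ for all $i\leq n$ (comparisons with $\pm\infty$ being automatically true). Isomorphisms preserve and reflect all of $<,<_1,\ldots,<_n$.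 *)

theory Defs
  imports Main "HOL-Library.Countable_Set"
begin

text \<open>A structure is given by a carrier P, a relation lt (the partial order <)
  and realizers R i for i < n (the linear orders <_1..<_n, indexed from 0).\<close>

definition strict_linear_on :: "'a set \<Rightarrow> ('a \<Rightarrow> 'a \<Rightarrow> bool) \<Rightarrow> bool" where
  "strict_linear_on P r \<longleftrightarrow>
     (\<forall>a\<in>P. \<not> r a a) \<and>
     (\<forall>a\<in>P. \<forall>b\<in>P. \<forall>c\<in>P. r a b \<longrightarrow> r b c \<longrightarrow> r a c) \<and>
     (\<forall>a\<in>P. \<forall>b\<in>P. a \<noteq> b \<longrightarrow> r a b \<or> r b a)"

definition npo :: "nat \<Rightarrow> 'a set \<Rightarrow> ('a \<Rightarrow> 'a \<Rightarrow> bool) \<Rightarrow> (nat \<Rightarrow> 'a \<Rightarrow> 'a \<Rightarrow> bool) \<Rightarrow> bool" where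
  "npo n P lt R \<longleftrightarrow> P \<noteq> {} \<and> (\<forall>i<n. strict_linear_on P (R i)) \<and>
     (\<forall>a\<in>P. \<forall>b\<in>P. lt a b \<longleftrightarrow> (\<forall>i<n. R i a b))"

text \<open>Endpoints of gaps: None stands for -infinity (left) resp. +infinity (right).\<close>

definition above_l :: "('a \<Rightarrow> 'a \<Rightarrow> bool) \<Rightarrow> 'a option \<Rightarrow> 'a \<Rightarrow> bool" where
  "above_l r l u = (case l of None \<Rightarrow> True | Some a \<Rightarrow> r a u)"

definition below_r :: "('a \<Rightarrow> 'a \<Rightarrow> bool) \<Rightarrow> 'a \<Rightarrow> 'a option \<Rightarrow> bool" where
  "below_r r u rt = (case rt of None \<Rightarrow> True | Some b \<Rightarrow> r u b)"

definition is_gap :: "('a \<Rightarrow> 'a \<Rightarrow> bool) \<Rightarrow> 'a set \<Rightarrow> 'a option \<Rightarrow> 'a option \<Rightarrow> bool" where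
  "is_gap r F l rt \<longleftrightarrow>
     l \<in> Some ` F \<union> {None} \<and> rt \<in> Some ` F \<union> {None} \<and>
     (case (l, rt) of (Some a, Some b) \<Rightarrow> r a b | _ \<Rightarrow> True) \<and>
     (\<forall>x\<in>F. \<not> (above_l r l x \<and> below_r r x rt))"

definition dense_npo :: "nat \<Rightarrow> 'a set \<Rightarrow> ('a \<Rightarrow> 'a \<Rightarrow> bool) \<Rightarrow> (nat \<Rightarrow> 'a \<Rightarrow> 'a \<Rightarrow> bool) \<Rightarrow> bool" where
  "dense_npo n P lt R \<longleftrightarrow> npo n P lt R \<and>
     (\<forall>F l rt. finite F \<and> F \<noteq> {} \<and> F \<subseteq> P \<and> (\<forall>i<n. is_gap (R i) F (l i) (rt i)) \<longrightarrow>
        (\<exists>u\<in>P. \<forall>i<n. above_l (R i) (l i) u \<and> below_r (R i) u (rt i)))"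

definition npo_iso :: "nat \<Rightarrow> 'a set \<Rightarrow> ('a \<Rightarrow> 'a \<Rightarrow> bool) \<Rightarrow> (nat \<Rightarrow> 'a \<Rightarrow> 'a \<Rightarrow> bool)
    \<Rightarrow> 'b set \<Rightarrow> ('b \<Rightarrow> 'b \<Rightarrow> bool) \<Rightarrow> (nat \<Rightarrow> 'b \<Rightarrow> 'b \<Rightarrow> bool) \<Rightarrow> ('a \<Rightarrow> 'b) \<Rightarrow> bool" where
  "npo_iso n P lt R Q lt' R' f \<longleftrightarrow> bij_betw f P Q \<and>
     (\<forall>a\<in>P. \<forall>b\<in>P. (lt a b \<longleftrightarrow> lt' (f a) (f b)) \<and> (\<forall>i<n. R i a b \<longleftrightarrow> R' i (f a) (f b)))"

definition npo_isomorphic :: "nat \<Rightarrow> 'a set \<Rightarrow> ('a \<Rightarrow> 'a \<Rightarrow> bool) \<Rightarrow> (nat \<Rightarrow> 'a \<Rightarrow> 'a \<Rightarrow> bool)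
    \<Rightarrow> 'b set \<Rightarrow> ('b \<Rightarrow> 'b \<Rightarrow> bool) \<Rightarrow> (nat \<Rightarrow> 'b \<Rightarrow> 'b \<Rightarrow> bool) \<Rightarrow> bool" where
  "npo_isomorphic n P lt R Q lt' R' \<longleftrightarrow> (\<exists>f. npo_iso n P lt R Q lt' R' f)"

definition rat_vecs :: "nat \<Rightarrow> rat list set" where
  "rat_vecs n = {x. length x = n}"

definition dense_in_Qn :: "nat \<Rightarrow> rat list set \<Rightarrow> bool" where
  "dense_in_Qn n D \<longleftrightarrow>
     (\<forall>a b. length a = n \<and> length b = n \<and> (\<forall>i<n. a ! i < b ! i) \<longrightarrow>
        (\<exists>d\<in>D. \<forall>i<n. a ! i < d ! i \<and> d ! i < b ! i))"

definition prod_lt :: "nat \<Rightarrow> rat list \<Rightarrow> rat list \<Rightarrow> bool" where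
  "prod_lt n a b \<longleftrightarrow> (\<forall>i<n. a ! i \<le> b ! i) \<and> a \<noteq> b"

definition coord_lt :: "nat \<Rightarrow> rat list \<Rightarrow> rat list \<Rightarrow> bool" where
  "coord_lt i a b \<longleftrightarrow> a ! i < b ! i"

end

theory Submission
  imports Defs
begin

(* Cantor's back-and-forth argument. A finite partial map between two dense n-dimensional orders
   that preserves all n realizers extends to any new point p: in each coordinate i, p cuts the
   image of the domain into the images of the points below and above p, which is a gap of that
   finite set in <_i, and density provides a point lying in these n gaps simultaneously.
   Enumerating two countable dense structures and extending alternately forth and back yields an
   isomorphism. D_n is such a structure: since distinct points differ in every coordinate, the
   coordinate orders are linear and their intersection is the product order, and a gap in every
   coordinate contains an open box of Q^n, which D_n meets by density. *)

lemma strict_linear_on_irrefl: "strict_linear_on A r \<Longrightarrow> x \<in> A \<Longrightarrow> \<not> r x x"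
  unfolding strict_linear_on_def by blast

lemma strict_linear_on_trans:
  "strict_linear_on A r \<Longrightarrow> x \<in> A \<Longrightarrow> y \<in> A \<Longrightarrow> z \<in> A \<Longrightarrow> r x y \<Longrightarrow> r y z \<Longrightarrow> r x z"
  unfolding strict_linear_on_def by blast

lemma strict_linear_on_total:
  "strict_linear_on A r \<Longrightarrow> x \<in> A \<Longrightarrow> y \<in> A \<Longrightarrow> x \<noteq> y \<Longrightarrow> r x y \<or> r y x"
  unfolding strict_linear_on_def by blast

lemma strict_linear_on_asym: "strict_linear_on A r \<Longrightarrow> x \<in> A \<Longrightarrow> y \<in> A \<Longrightarrow> r x y \<Longrightarrow> \<not> r y x"
  unfolding strict_linear_on_def by blast

lemma strict_linear_on_converse: "strict_linear_on A r \<Longrightarrow> strict_linear_on A (\<lambda>x y. r y x)"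
  unfolding strict_linear_on_def by blast

lemma strict_linear_on_finite_has_max:
  assumes lin: "strict_linear_on A r" and "finite X" "X \<noteq> {}" "X \<subseteq> A"
  obtains m where "m \<in> X" "\<And>x. x \<in> X \<Longrightarrow> x = m \<or> r x m"
  using assms(2-4)
proof (induction X arbitrary: thesis rule: finite_ne_induct)
  case (singleton x)
  then show ?case by blast
next
  case (insert x X)
  then obtain m where m: "m \<in> X" "\<And>y. y \<in> X \<Longrightarrow> y = m \<or> r y m" by blast
  have "m \<in> A" "x \<in> A" "X \<subseteq> A" using insert.prems m by auto
  then consider "r m x" | "x = m \<or> r x m"
    using strict_linear_on_total[OF lin] by blast
  then show ?case
  proof cases
    case 1
    then have "y = x \<or> r y x" if "y \<in> insert x X" for y
      using that m strict_linear_on_trans[OF lin, of y m x] \<open>X \<subseteq> A\<close> \<open>m \<in> A\<close> \<open>x \<in> A\<close> by blast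
    then show ?thesis using insert.prems(1) by blast
  next
    case 2
    then show ?thesis using insert.prems(1) m by blast
  qed
qed

lemma above_l_converse: "above_l (\<lambda>x y. r y x) e u = below_r r u e"
  unfolding above_l_def below_r_def by (simp split: option.split)

lemma finite_max_endpoint:
  assumes lin: "strict_linear_on B r" and "finite L" "L \<subseteq> B"
  shows "\<exists>l. l \<in> Some ` L \<union> {None} \<and> (\<forall>x\<in>L. \<not> above_l r l x) \<and>
    (\<forall>u\<in>B. above_l r l u \<longrightarrow> (\<forall>x\<in>L. r x u))"
proof (cases "L = {}")
  case True
  then show ?thesis by simp
next
  case False
  then obtain m where m: "m \<in> L" "\<And>x. x \<in> L \<Longrightarrow> x = m \<or> r x m"
    using strict_linear_on_finite_has_max[OF lin \<open>finite L\<close> _ \<open>L \<subseteq> B\<close>] by metis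
  have "m \<in> B" using m(1) \<open>L \<subseteq> B\<close> by blast
  have "\<not> r m x" if "x \<in> L" for x
    using m(2)[OF that] that \<open>m \<in> B\<close> \<open>L \<subseteq> B\<close>
      strict_linear_on_irrefl[OF lin] strict_linear_on_asym[OF lin] by blast
  moreover have "r x u" if "u \<in> B" "r m u" "x \<in> L" for x u
    using m(2)[OF that(3)] that \<open>m \<in> B\<close> \<open>L \<subseteq> B\<close>
      strict_linear_on_trans[OF lin _ \<open>m \<in> B\<close> that(1)] by blast
  ultimately show ?thesis
    using m(1) unfolding above_l_def by (intro exI[of _ "Some m"]) auto
qed

text \<open>The gap cut out by a partition \<open>L < U\<close> of a finite set runs from the largest element of
  \<open>L\<close> to the smallest element of \<open>U\<close>, an empty part giving an infinite end.\<close>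

lemma cut_gap:
  assumes lin: "strict_linear_on B r" and fin: "finite F" and FB: "F \<subseteq> B"
    and F: "F = L \<union> U" and sep: "\<And>x y. x \<in> L \<Longrightarrow> y \<in> U \<Longrightarrow> r x y"
  shows "\<exists>l rt. is_gap r F l rt \<and>
    (\<forall>u\<in>B. above_l r l u \<longrightarrow> below_r r u rt \<longrightarrow> (\<forall>x\<in>L. r x u) \<and> (\<forall>y\<in>U. r u y))"
proof -
  have "finite L" "L \<subseteq> B" "finite U" "U \<subseteq> B" using F FB fin by auto
  obtain l where l: "l \<in> Some ` L \<union> {None}" "\<forall>x\<in>L. \<not> above_l r l x"
    "\<forall>u\<in>B. above_l r l u \<longrightarrow> (\<forall>x\<in>L. r x u)"
    using finite_max_endpoint[OF lin \<open>finite L\<close> \<open>L \<subseteq> B\<close>] by blast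
  obtain rt where rt: "rt \<in> Some ` U \<union> {None}" "\<forall>y\<in>U. \<not> below_r r y rt"
    "\<forall>u\<in>B. below_r r u rt \<longrightarrow> (\<forall>y\<in>U. r u y)"
    using finite_max_endpoint[OF strict_linear_on_converse[OF lin] \<open>finite U\<close> \<open>U \<subseteq> B\<close>]
    unfolding above_l_converse by blast
  have "case (l, rt) of (Some a, Some b) \<Rightarrow> r a b | _ \<Rightarrow> True"
    using l(1) rt(1) sep by (cases l; cases rt) auto
  moreover have "l \<in> Some ` F \<union> {None}" "rt \<in> Some ` F \<union> {None}"
    using l(1) rt(1) F by auto
  ultimately have "is_gap r F l rt"
    unfolding is_gap_def using l(2) rt(2) F by blast
  then show ?thesis using l(3) rt(3) by blast
qed

definition finite_partial_iso ::
    "nat \<Rightarrow> 'a set \<Rightarrow> (nat \<Rightarrow> 'a \<Rightarrow> 'a \<Rightarrow> bool) \<Rightarrow> 'b set \<Rightarrow> (nat \<Rightarrow> 'b \<Rightarrow> 'b \<Rightarrow> bool)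
      \<Rightarrow> ('a \<times> 'b) set \<Rightarrow> bool" where
  "finite_partial_iso n A RA B RB S \<longleftrightarrow> finite S \<and> S \<subseteq> A \<times> B \<and>
     (\<forall>a b a' b' i. (a, b) \<in> S \<longrightarrow> (a', b') \<in> S \<longrightarrow> i < n \<longrightarrow> (RA i a a' \<longleftrightarrow> RB i b b'))"

lemma finite_partial_iso_empty: "finite_partial_iso n A RA B RB {}"
  unfolding finite_partial_iso_def by simp

lemma finite_partial_iso_subset: "finite_partial_iso n A RA B RB S \<Longrightarrow> S \<subseteq> A \<times> B"
  unfolding finite_partial_iso_def by blast

lemma finite_partial_iso_converse:
  "finite_partial_iso n A RA B RB S \<longleftrightarrow> finite_partial_iso n B RB A RA (S\<inverse>)"
  unfolding finite_partial_iso_def by auto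

lemma finite_partial_iso_insert:
  assumes S: "finite_partial_iso n A RA B RB S" and "p \<in> A" "q \<in> B"
    and "\<forall>i<n. strict_linear_on A (RA i)" "\<forall>i<n. strict_linear_on B (RB i)"
    and same_side: "\<And>a b i. (a, b) \<in> S \<Longrightarrow> i < n \<Longrightarrow>
      (RA i a p \<longleftrightarrow> RB i b q) \<and> (RA i p a \<longleftrightarrow> RB i q b)"
  shows "finite_partial_iso n A RA B RB (insert (p, q) S)"
proof -
  have irrefl: "\<not> RA i p p" "\<not> RB i q q" if "i < n" for i
    using assms(2-5) that strict_linear_on_irrefl by metis+
  have "RA i a a' \<longleftrightarrow> RB i b b'"
    if "(a, b) \<in> insert (p, q) S" "(a', b') \<in> insert (p, q) S" "i < n" for a b a' b' i
    using that S irrefl[OF \<open>i < n\<close>] same_side[of a b i] same_side[of a' b' i]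
    unfolding finite_partial_iso_def by auto
  then show ?thesis
    using S assms(2,3) unfolding finite_partial_iso_def by blast
qed

lemma new_point_gap:
  assumes linA: "strict_linear_on A r" and linB: "strict_linear_on B r'"
    and "finite S" "S \<subseteq> A \<times> B"
    and iso: "\<And>a b a' b'. (a, b) \<in> S \<Longrightarrow> (a', b') \<in> S \<Longrightarrow> r a a' \<longleftrightarrow> r' b b'"
    and p: "p \<in> A" "p \<notin> fst ` S"
  shows "\<exists>l rt. is_gap r' (snd ` S) l rt \<and> (\<forall>u\<in>B. above_l r' l u \<longrightarrow> below_r r' u rt \<longrightarrow>
    (\<forall>a b. (a, b) \<in> S \<longrightarrow> (r a p \<longleftrightarrow> r' b u) \<and> (r p a \<longleftrightarrow> r' u b)))"
proof -
  define L where "L = {b. \<exists>a. (a, b) \<in> S \<and> r a p}"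
  define U where "U = {b. \<exists>a. (a, b) \<in> S \<and> r p a}"
  have side: "r a p \<or> r p a" if "(a, b) \<in> S" for a b
  proof -
    have "a \<in> A" "a \<noteq> p" using that \<open>S \<subseteq> A \<times> B\<close> p(2) by force+
    then show ?thesis using strict_linear_on_total[OF linA _ p(1)] by blast
  qed
  have cut: "snd ` S = L \<union> U"
    unfolding L_def U_def using side by force
  have sep: "r' x y" if xy: "x \<in> L" "y \<in> U" for x y
  proof -
    obtain a a' where a: "(a, x) \<in> S" "r a p" and a': "(a', y) \<in> S" "r p a'"
      using xy unfolding L_def U_def by blast
    have "a \<in> A" "a' \<in> A" using a(1) a'(1) \<open>S \<subseteq> A \<times> B\<close> by blast+
    then have "r a a'" using strict_linear_on_trans[OF linA _ p(1)] a(2) a'(2) by blast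
    then show ?thesis using iso[OF a(1) a'(1)] by blast
  qed
  have SB: "finite (snd ` S)" "snd ` S \<subseteq> B" using \<open>finite S\<close> \<open>S \<subseteq> A \<times> B\<close> by auto
  obtain l rt where gap: "is_gap r' (snd ` S) l rt"
    and bounds: "\<forall>u\<in>B. above_l r' l u \<longrightarrow> below_r r' u rt \<longrightarrow> (\<forall>x\<in>L. r' x u) \<and> (\<forall>y\<in>U. r' u y)"
    using cut_gap[OF linB SB cut sep] by blast
  have "(r a p \<longleftrightarrow> r' b u) \<and> (r p a \<longleftrightarrow> r' u b)"
    if u: "u \<in> B" "above_l r' l u" "below_r r' u rt" and ab: "(a, b) \<in> S" for u a b
  proof -
    have "a \<in> A" "b \<in> B" using ab \<open>S \<subseteq> A \<times> B\<close> by blast+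
    have "r' b u" if "r a p" using bounds u ab that unfolding L_def by blast
    moreover have "r' u b" if "r p a" using bounds u ab that unfolding U_def by blast
    ultimately show ?thesis
      using side[OF ab] strict_linear_on_asym[OF linA \<open>a \<in> A\<close> p(1)]
        strict_linear_on_asym[OF linA p(1) \<open>a \<in> A\<close>] strict_linear_on_asym[OF linB \<open>b \<in> B\<close> u(1)]
        strict_linear_on_asym[OF linB u(1) \<open>b \<in> B\<close>]
      by blast
  qed
  then show ?thesis using gap by blast
qed

lemma finite_partial_iso_extend_new:
  assumes linA: "\<forall>i<n. strict_linear_on A (RA i)" and dense: "dense_npo n B ltB RB"
    and S: "finite_partial_iso n A RA B RB S" and "S \<noteq> {}"
    and p: "p \<in> A" "p \<notin> fst ` S"
  shows "\<exists>q\<in>B. finite_partial_iso n A RA B RB (insert (p, q) S)"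
proof -
  have linB: "\<forall>i<n. strict_linear_on B (RB i)"
    using dense unfolding dense_npo_def npo_def by blast
  have fin: "finite S" and SAB: "S \<subseteq> A \<times> B"
    and iso: "\<And>a b a' b' i. (a, b) \<in> S \<Longrightarrow> (a', b') \<in> S \<Longrightarrow> i < n \<Longrightarrow> RA i a a' \<longleftrightarrow> RB i b b'"
    using S unfolding finite_partial_iso_def by blast+
  have "\<exists>l rt. is_gap (RB i) (snd ` S) l rt \<and>
    (\<forall>u\<in>B. above_l (RB i) l u \<longrightarrow> below_r (RB i) u rt \<longrightarrow>
      (\<forall>a b. (a, b) \<in> S \<longrightarrow> (RA i a p \<longleftrightarrow> RB i b u) \<and> (RA i p a \<longleftrightarrow> RB i u b)))"
    if "i < n" for i
    using new_point_gap[OF linA[rule_format, OF that] linB[rule_format, OF that] fin SAB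
        iso[OF _ _ that] p] .
  then obtain l rt where gap: "\<forall>i<n. is_gap (RB i) (snd ` S) (l i) (rt i)"
    and bounds: "\<forall>i<n. \<forall>u\<in>B. above_l (RB i) (l i) u \<longrightarrow> below_r (RB i) u (rt i) \<longrightarrow>
      (\<forall>a b. (a, b) \<in> S \<longrightarrow> (RA i a p \<longleftrightarrow> RB i b u) \<and> (RA i p a \<longleftrightarrow> RB i u b))"
    by metis
  have "finite (snd ` S)" "snd ` S \<noteq> {}" "snd ` S \<subseteq> B" using fin SAB \<open>S \<noteq> {}\<close> by auto
  then obtain q where "q \<in> B" "\<forall>i<n. above_l (RB i) (l i) q \<and> below_r (RB i) q (rt i)"
    using dense gap unfolding dense_npo_def by blast
  then have "finite_partial_iso n A RA B RB (insert (p, q) S)"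
    using bounds by (intro finite_partial_iso_insert[OF S p(1) \<open>q \<in> B\<close> linA linB]) blast
  then show ?thesis using \<open>q \<in> B\<close> by blast
qed

lemma finite_partial_iso_extend:
  assumes "\<forall>i<n. strict_linear_on A (RA i)" and dense: "dense_npo n B ltB RB"
    and S: "finite_partial_iso n A RA B RB S" and p: "p \<in> A"
  shows "\<exists>q\<in>B. finite_partial_iso n A RA B RB (insert (p, q) S)"
proof -
  consider (old) b where "(p, b) \<in> S" | (empty) "S = {}" | (new) "S \<noteq> {}" "p \<notin> fst ` S"
    by force
  then show ?thesis
  proof cases
    case old
    then have "b \<in> B" "insert (p, b) S = S" using S unfolding finite_partial_iso_def by blast+
    then show ?thesis using S by metis
  next
    case empty
    obtain q where "q \<in> B" using dense unfolding dense_npo_def npo_def by blast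
    moreover have "\<forall>i<n. strict_linear_on B (RB i)"
      using dense unfolding dense_npo_def npo_def by blast
    ultimately show ?thesis
      using finite_partial_iso_insert[OF S p _ assms(1)] empty by blast
  next
    case new
    then show ?thesis using finite_partial_iso_extend_new[OF assms(1) dense S _ p] by metis
  qed
qed

lemma finite_partial_iso_extend_backward:
  assumes "\<forall>i<n. strict_linear_on B (RB i)" and dense: "dense_npo n A ltA RA"
    and S: "finite_partial_iso n A RA B RB S" and q: "q \<in> B"
  shows "\<exists>p\<in>A. finite_partial_iso n A RA B RB (insert (p, q) S)"
proof -
  have "finite_partial_iso n B RB A RA (S\<inverse>)" using S finite_partial_iso_converse by blast
  then obtain p where "p \<in> A" "finite_partial_iso n B RB A RA (insert (q, p) (S\<inverse>))"
    using finite_partial_iso_extend[OF assms(1) dense _ q] by blast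
  moreover have "insert (q, p) (S\<inverse>) = (insert (p, q) S)\<inverse>" by blast
  ultimately show ?thesis using finite_partial_iso_converse by metis
qed

lemma Suc_mono_common_member:
  assumes "\<And>k. X k \<subseteq> X (Suc k)" "x \<in> (\<Union>k. X k)" "y \<in> (\<Union>k. X k)"
  shows "\<exists>k. x \<in> X k \<and> y \<in> X k"
proof -
  obtain k k' where "x \<in> X k" "y \<in> X k'" using assms(2,3) by blast
  moreover have "X k \<subseteq> X (max k k')" "X k' \<subseteq> X (max k k')"
    using lift_Suc_mono_le[of X, OF assms(1)] by simp_all
  ultimately show ?thesis by blast
qed

lemma back_and_forth_round:
  assumes forth: "\<And>S p. P S \<Longrightarrow> p \<in> A \<Longrightarrow> \<exists>q\<in>B. P (insert (p, q) S)"
    and backward: "\<And>S q. P S \<Longrightarrow> q \<in> B \<Longrightarrow> \<exists>p\<in>A. P (insert (p, q) S)"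
    and "P S" "a \<in> A" "b \<in> B"
  shows "\<exists>S'. P S' \<and> S \<subseteq> S' \<and> a \<in> fst ` S' \<and> b \<in> snd ` S'"
proof -
  obtain q where "P (insert (a, q) S)" using forth[OF \<open>P S\<close> \<open>a \<in> A\<close>] by blast
  then obtain p where "P (insert (p, b) (insert (a, q) S))" using backward[OF _ \<open>b \<in> B\<close>] by blast
  then show ?thesis by (intro exI[of _ "insert (p, b) (insert (a, q) S)"]) force
qed

lemma back_and_forth:
  assumes "countable A" "countable B" "A \<noteq> {}" "B \<noteq> {}"
    and "P {}" and P_sub: "\<And>S. P S \<Longrightarrow> S \<subseteq> A \<times> B"
    and forth: "\<And>S p. P S \<Longrightarrow> p \<in> A \<Longrightarrow> \<exists>q\<in>B. P (insert (p, q) S)"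
    and backward: "\<And>S q. P S \<Longrightarrow> q \<in> B \<Longrightarrow> \<exists>p\<in>A. P (insert (p, q) S)"
  shows "\<exists>U. U \<subseteq> A \<times> B \<and> A \<subseteq> fst ` U \<and> B \<subseteq> snd ` U \<and>
    (\<forall>x\<in>U. \<forall>y\<in>U. \<exists>S. P S \<and> x \<in> S \<and> y \<in> S)"
proof -
  have round: "\<exists>S'. P S' \<and> S \<subseteq> S' \<and> from_nat_into A k \<in> fst ` S' \<and> from_nat_into B k \<in> snd ` S'"
    if "P S" for S k
    using back_and_forth_round[of P A B, OF forth backward that
        from_nat_into[OF \<open>A \<noteq> {}\<close>] from_nat_into[OF \<open>B \<noteq> {}\<close>]] .
  define extend where "extend k S = (SOME S'. P S' \<and> S \<subseteq> S' \<and>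
    from_nat_into A k \<in> fst ` S' \<and> from_nat_into B k \<in> snd ` S')" for k S
  have extend: "P (extend k S) \<and> S \<subseteq> extend k S \<and>
      from_nat_into A k \<in> fst ` extend k S \<and> from_nat_into B k \<in> snd ` extend k S"
    if "P S" for S k
    unfolding extend_def by (rule someI_ex) (rule round[OF that])
  define stage where "stage k = rec_nat {} extend k" for k
  have stage_Suc: "stage (Suc k) = extend k (stage k)" for k
    unfolding stage_def by simp
  have P_stage: "P (stage k)" for k
    by (induction k) (simp_all add: stage_def \<open>P {}\<close> extend)
  have grows: "stage k \<subseteq> stage (Suc k)" "from_nat_into A k \<in> fst ` stage (Suc k)"
    "from_nat_into B k \<in> snd ` stage (Suc k)" for k
    using extend[OF P_stage, of k] unfolding stage_Suc by blast+
  show ?thesis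
  proof (rule exI[of _ "\<Union>k. stage k"], intro conjI ballI)
    show "(\<Union>k. stage k) \<subseteq> A \<times> B" using P_sub P_stage by blast
    show "A \<subseteq> fst ` (\<Union>k. stage k)"
    proof
      fix a assume "a \<in> A"
      then obtain k where "from_nat_into A k = a" using from_nat_into_surj \<open>countable A\<close> by metis
      then show "a \<in> fst ` (\<Union>k. stage k)" using grows(2)[of k] by auto
    qed
    show "B \<subseteq> snd ` (\<Union>k. stage k)"
    proof
      fix b assume "b \<in> B"
      then obtain k where "from_nat_into B k = b" using from_nat_into_surj \<open>countable B\<close> by metis
      then show "b \<in> snd ` (\<Union>k. stage k)" using grows(3)[of k] by auto
    qed
    fix x y assume "x \<in> (\<Union>k. stage k)" "y \<in> (\<Union>k. stage k)"
    then obtain k where "x \<in> stage k" "y \<in> stage k"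
      using Suc_mono_common_member[of stage x y, OF grows(1)] by blast
    then show "\<exists>S. P S \<and> x \<in> S \<and> y \<in> S" using P_stage by blast
  qed
qed

lemma order_preserving_pair_eq_iff:
  assumes "strict_linear_on A r" "strict_linear_on B r'" "a \<in> A" "a' \<in> A" "b \<in> B" "b' \<in> B"
    and "r a a' \<longleftrightarrow> r' b b'" "r a' a \<longleftrightarrow> r' b' b"
  shows "a = a' \<longleftrightarrow> b = b'"
  using assms strict_linear_on_irrefl strict_linear_on_total by metis

lemma realizer_preserving_relation_bij:
  assumes "0 < n" "strict_linear_on A (RA 0)" "strict_linear_on B (RB 0)"
    and U: "U \<subseteq> A \<times> B" "A \<subseteq> fst ` U" "B \<subseteq> snd ` U"
    and iso: "\<And>a b a' b' i. (a, b) \<in> U \<Longrightarrow> (a', b') \<in> U \<Longrightarrow> i < n \<Longrightarrow> RA i a a' \<longleftrightarrow> RB i b b'"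
  shows "\<exists>f. bij_betw f A B \<and> (\<forall>a\<in>A. \<forall>a'\<in>A. \<forall>i<n. RA i a a' \<longleftrightarrow> RB i (f a) (f a'))"
proof -
  have eq_iff: "a = a' \<longleftrightarrow> b = b'" if "(a, b) \<in> U" "(a', b') \<in> U" for a b a' b'
    using order_preserving_pair_eq_iff[OF assms(2,3)] that U(1) iso[OF that \<open>0 < n\<close>]
      iso[OF that(2,1) \<open>0 < n\<close>] by blast
  define f where "f a = (SOME b. (a, b) \<in> U)" for a
  have graph: "(a, f a) \<in> U" if "a \<in> A" for a
  proof -
    obtain b where "(a, b) \<in> U" using \<open>a \<in> A\<close> U(2) by force
    then show ?thesis unfolding f_def by (rule someI)
  qed
  have "bij_betw f A B"
  proof (rule bij_betw_imageI)
    show "inj_on f A" using graph eq_iff by (metis inj_onI)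
    show "f ` A = B"
    proof
      show "f ` A \<subseteq> B" using graph U(1) by blast
      show "B \<subseteq> f ` A"
      proof
        fix b assume "b \<in> B"
        then obtain a where "(a, b) \<in> U" using U(3) by force
        then show "b \<in> f ` A" using eq_iff graph U(1) by (metis SigmaD1 image_eqI subsetD)
      qed
    qed
  qed
  then show ?thesis using graph iso by blast
qed

lemma npo_iso_if_realizers_preserved:
  assumes "npo n A ltA RA" "npo n B ltB RB" "bij_betw f A B"
    and preserved: "\<forall>a\<in>A. \<forall>a'\<in>A. \<forall>i<n. RA i a a' \<longleftrightarrow> RB i (f a) (f a')"
  shows "npo_iso n A ltA RA B ltB RB f"
  unfolding npo_iso_def
proof (intro conjI ballI)
  fix a a' assume "a \<in> A" "a' \<in> A"
  moreover from this have "f a \<in> B" "f a' \<in> B" using bij_betwE assms(3) by blast+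
  ultimately show "ltA a a' \<longleftrightarrow> ltB (f a) (f a')" "\<forall>i<n. RA i a a' \<longleftrightarrow> RB i (f a) (f a')"
    using assms(1,2) preserved unfolding npo_def by simp_all
qed (fact assms(3))

lemma countable_dense_npo_isomorphic:
  assumes "0 < n" "countable A" "countable B"
    and dA: "dense_npo n A ltA RA" and dB: "dense_npo n B ltB RB"
  shows "npo_isomorphic n A ltA RA B ltB RB"
proof -
  have "npo n A ltA RA" "npo n B ltB RB" using dA dB unfolding dense_npo_def by blast+
  then have linA: "\<forall>i<n. strict_linear_on A (RA i)" and linB: "\<forall>i<n. strict_linear_on B (RB i)"
    and "A \<noteq> {}" "B \<noteq> {}"
    unfolding npo_def by blast+
  have "\<exists>U. U \<subseteq> A \<times> B \<and> A \<subseteq> fst ` U \<and> B \<subseteq> snd ` U \<and>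
      (\<forall>x\<in>U. \<forall>y\<in>U. \<exists>S. finite_partial_iso n A RA B RB S \<and> x \<in> S \<and> y \<in> S)"
    using back_and_forth[where P = "finite_partial_iso n A RA B RB",
        OF \<open>countable A\<close> \<open>countable B\<close> \<open>A \<noteq> {}\<close> \<open>B \<noteq> {}\<close>
        finite_partial_iso_empty finite_partial_iso_subset finite_partial_iso_extend[OF linA dB]
        finite_partial_iso_extend_backward[OF linB dA]] .
  then obtain U where U: "U \<subseteq> A \<times> B" "A \<subseteq> fst ` U" "B \<subseteq> snd ` U"
    and pairs: "\<forall>x\<in>U. \<forall>y\<in>U. \<exists>S. finite_partial_iso n A RA B RB S \<and> x \<in> S \<and> y \<in> S"
    by (elim exE conjE)
  have "RA i a a' \<longleftrightarrow> RB i b b'" if "(a, b) \<in> U" "(a', b') \<in> U" "i < n" for a b a' b' i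
    using pairs that unfolding finite_partial_iso_def by blast
  then obtain f where "bij_betw f A B" "\<forall>a\<in>A. \<forall>a'\<in>A. \<forall>i<n. RA i a a' \<longleftrightarrow> RB i (f a) (f a')"
    using realizer_preserving_relation_bij[where RA = RA and RB = RB, OF \<open>0 < n\<close>
        linA[rule_format, OF \<open>0 < n\<close>] linB[rule_format, OF \<open>0 < n\<close>] U]
    by blast
  then have "npo_iso n A ltA RA B ltB RB f"
    by (intro npo_iso_if_realizers_preserved[OF \<open>npo n A ltA RA\<close> \<open>npo n B ltB RB\<close>])
  then show ?thesis unfolding npo_isomorphic_def by blast
qed

lemma dense_in_QnD:
  assumes "dense_in_Qn n D" "\<And>i. i < n \<Longrightarrow> lo i < hi i"
  shows "\<exists>d\<in>D. \<forall>i<n. lo i < d ! i \<and> d ! i < hi i"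
  using assms(1)[unfolded dense_in_Qn_def, rule_format, of "map lo [0..<n]" "map hi [0..<n]"]
    assms(2)
  by simp

lemma coord_gap_interval:
  assumes "case (l, rt) of (Some a, Some b) \<Rightarrow> coord_lt i a b | _ \<Rightarrow> True"
  shows "\<exists>lo hi. lo < hi \<and>
    (\<forall>x. lo < x ! i \<and> x ! i < hi \<longrightarrow> above_l (coord_lt i) l x \<and> below_r (coord_lt i) x rt)"
proof (cases l; cases rt)
  assume "l = None" "rt = None"
  then show ?thesis unfolding above_l_def below_r_def by (intro exI[of _ 0] exI[of _ 1]) simp
next
  fix b assume "l = None" "rt = Some b"
  then show ?thesis unfolding above_l_def below_r_def coord_lt_def
    by (intro exI[of _ "b ! i - 1"] exI[of _ "b ! i"]) simp
next
  fix a assume "l = Some a" "rt = None"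
  then show ?thesis unfolding above_l_def below_r_def coord_lt_def
    by (intro exI[of _ "a ! i"] exI[of _ "a ! i + 1"]) simp
next
  fix a b assume "l = Some a" "rt = Some b"
  then show ?thesis using assms unfolding above_l_def below_r_def coord_lt_def
    by (intro exI[of _ "a ! i"] exI[of _ "b ! i"]) simp
qed

lemma npo_coordinates:
  assumes "0 < n" "D \<noteq> {}" and distinct: "\<forall>x\<in>D. \<forall>y\<in>D. x \<noteq> y \<longrightarrow> (\<forall>i<n. x ! i \<noteq> y ! i)"
  shows "npo n D (prod_lt n) coord_lt"
proof -
  have "strict_linear_on D (coord_lt i)" if "i < n" for i
    unfolding strict_linear_on_def coord_lt_def
  proof (intro conjI ballI impI)
    fix x y assume "x \<in> D" "y \<in> D" "x \<noteq> y"
    then show "x ! i < y ! i \<or> y ! i < x ! i" using distinct that by (simp add: neq_iff)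
  qed auto
  moreover have "prod_lt n a b \<longleftrightarrow> (\<forall>i<n. coord_lt i a b)" if "a \<in> D" "b \<in> D" for a b
  proof
    assume "prod_lt n a b"
    then show "\<forall>i<n. coord_lt i a b"
      using distinct that unfolding prod_lt_def coord_lt_def by (metis order_le_neq_trans)
  next
    assume "\<forall>i<n. coord_lt i a b"
    moreover from this have "a \<noteq> b" using \<open>0 < n\<close> unfolding coord_lt_def by blast
    ultimately show "prod_lt n a b" unfolding prod_lt_def coord_lt_def by (simp add: less_imp_le)
  qed
  ultimately show ?thesis unfolding npo_def using \<open>D \<noteq> {}\<close> by blast
qed

lemma dense_npo_coordinates:
  assumes "0 < n" "dense_in_Qn n D"
    and distinct: "\<forall>x\<in>D. \<forall>y\<in>D. x \<noteq> y \<longrightarrow> (\<forall>i<n. x ! i \<noteq> y ! i)"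
  shows "dense_npo n D (prod_lt n) coord_lt"
proof -
  have "D \<noteq> {}" using dense_in_QnD[OF assms(2), of "\<lambda>_. 0" "\<lambda>_. 1"] by auto
  have "\<exists>u\<in>D. \<forall>i<n. above_l (coord_lt i) (l i) u \<and> below_r (coord_lt i) u (rt i)"
    if "\<forall>i<n. is_gap (coord_lt i) F (l i) (rt i)" for F l rt
  proof -
    have "\<forall>i. \<exists>lo hi. i < n \<longrightarrow> lo < hi \<and> (\<forall>x. lo < x ! i \<and> x ! i < hi \<longrightarrow>
        above_l (coord_lt i) (l i) x \<and> below_r (coord_lt i) x (rt i))"
      using that coord_gap_interval unfolding is_gap_def by blast
    then obtain lo hi where "\<And>i. i < n \<Longrightarrow> lo i < hi i"
      and "\<And>i x. i < n \<Longrightarrow> lo i < x ! i \<Longrightarrow> x ! i < hi i \<Longrightarrow>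
        above_l (coord_lt i) (l i) x \<and> below_r (coord_lt i) x (rt i)"
      by metis
    then show ?thesis using dense_in_QnD[OF assms(2), of lo hi] by meson
  qed
  then show ?thesis
    unfolding dense_npo_def using npo_coordinates[OF \<open>0 < n\<close> \<open>D \<noteq> {}\<close> distinct] by blast
qed

theorem theorem4p5:
  fixes n :: nat and D :: "rat list set"
  assumes "n \<ge> 2"
    and "D \<subseteq> rat_vecs n"
    and "dense_in_Qn n D"
    and "\<forall>x\<in>D. \<forall>y\<in>D. x \<noteq> y \<longrightarrow> (\<forall>i<n. x ! i \<noteq> y ! i)"
  shows "countable D \<and> dense_npo n D (prod_lt n) coord_lt \<and>
    (\<forall>(P :: 'a set) lt R. countable P \<and> dense_npo n P lt R \<longrightarrow>
        npo_isomorphic n P lt R D (prod_lt n) coord_lt)"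
proof -
  have "0 < n" using assms(1) by simp
  have "countable D" by (rule countableI_type)
  moreover have dense: "dense_npo n D (prod_lt n) coord_lt"
    using dense_npo_coordinates[OF \<open>0 < n\<close> assms(3,4)] .
  moreover have "npo_isomorphic n P lt R D (prod_lt n) coord_lt"
    if "countable P" "dense_npo n P lt R" for P :: "'a set" and lt R
    using countable_dense_npo_isomorphic[OF \<open>0 < n\<close> that(1) \<open>countable D\<close> that(2) dense] .
  ultimately show ?thesis by blast
qed

end
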